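(* Assume Assumption A. Let $(\sigma_i)_{i\in\mathbb{N}}$ be i.i.d. copies of $\sigma_0$, let $r_n$ be the index of the $n$-th record of this sequence and $\sigma_{(n)}:=\sigma_{r_n}$. Then for each $\varepsilon>0$ there exists $c>0$ such that for all $n\in\mathbb{N}$, \[ \mathbf{P}\big(\log L(\sigma_{(n)})\notin (n(1-\varepsilon),n(1+\varepsilon))\big)<c\,n^{-2}. \] In particular, $\log L(\sigma_{(n)})\sim n$ as $n\to\infty$ almost-surely.
   Context: $\sigma_0$ is a strictly positive random variable under $\mathbf{P}$ and $L(u):=1/\mathbf{P}(\sigma_0>u)$ satisfies $\lim_{u\to\infty}L(uv)/L(u)=1$ for all $v>0$. Records: $r_1:=1$ and $r_{n+1}:=\min\{i>r_n:\sigma_i>\sigma_{r_n}\}$. Assumption A: $L$ is continuous, and there exist functions $g,k$ with $g(u)\to0$ as $u\to\infty$, $g$ eventually monotone decreasing, such that $\lim_{u\to\infty}\big(L(uv)/L(u)-1\big)/g(u)=k(v)$ for every $v>0$, where there exists $v$ with $k(v)\neq0$ and $k(uv)\ne k(u)$ for all $u>0$. *)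

theory Defs
  imports "HOL-Probability.Probability"
begin

definition invtail :: "'a measure \<Rightarrow> ('a \<Rightarrow> real) \<Rightarrow> real \<Rightarrow> real" where
  "invtail M Y u = 1 / measure M {x \<in> space M. Y x > u}"

text \<open>Record indices of a sequence s (indexed from 1): r_1 = 1,
  r_(n+1) = min {i > r_n. s i > s (r_n)}. The value at 0 is a dummy.\<close>
primrec record_idx :: "(nat \<Rightarrow> real) \<Rightarrow> nat \<Rightarrow> nat" where
  "record_idx s 0 = 1"
| "record_idx s (Suc n) =
     (if n = 0 then 1 else (LEAST i. i > record_idx s n \<and> s i > s (record_idx s n)))"

end

theory Submission
  imports Defs
begin

text \<open>Write \<open>F u = P(\<sigma>\<^sub>0 > u)\<close> for the tail and \<open>H = - ln F = ln L\<close>. Given that the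
  \<open>n\<close>-th record value is \<open>v\<close>, the waiting time for the next record is geometric, so the next
  record exceeds \<open>w\<close> with probability \<open>F (max w v) / F v = min 1 (exp (H v - H w))\<close>. As \<open>F\<close> is
  continuous, \<open>H\<close> attains every level, and this recursion shows inductively that \<open>H\<close> of the
  \<open>n\<close>-th record has the Erlang (Gamma(\<open>n\<close>,1)) distribution. Its centred fourth moment is
  \<open>3n\<^sup>2 + 6n\<close>, so Markov's inequality bounds the deviation probability by \<open>9/(\<epsilon>\<^sup>4 n\<^sup>2)\<close>,
  and Borel--Cantelli gives almost sure convergence.\<close>

section \<open>Records of a real sequence\<close>

definition always_exceeded :: "(nat \<Rightarrow> real) \<Rightarrow> bool" where
  "always_exceeded s \<longleftrightarrow> (\<forall>j. \<exists>i>j. s j < s i)"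

lemma record_idx_Suc:
  assumes s: "always_exceeded s" and n: "n \<ge> 1"
  shows "record_idx s n < record_idx s (Suc n)"
    and "s (record_idx s n) < s (record_idx s (Suc n))"
    and "\<And>i. record_idx s n < i \<Longrightarrow> i < record_idx s (Suc n) \<Longrightarrow> s i \<le> s (record_idx s n)"
proof -
  let ?a = "record_idx s n"
  have eq: "record_idx s (Suc n) = (LEAST i. i > ?a \<and> s i > s ?a)" using n by simp
  obtain i where "i > ?a" "s i > s ?a" using s unfolding always_exceeded_def by blast
  hence "record_idx s (Suc n) > ?a \<and> s (record_idx s (Suc n)) > s ?a"
    unfolding eq by (rule LeastI[of "\<lambda>i. i > ?a \<and> s i > s ?a", OF conjI])
  thus "?a < record_idx s (Suc n)" "s ?a < s (record_idx s (Suc n))" by auto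
  fix i assume "?a < i" "i < record_idx s (Suc n)"
  thus "s i \<le> s ?a" unfolding eq using not_less_Least by force
qed

lemma record_idx_eq_if_prefix_eq:
  assumes s: "always_exceeded s" "always_exceeded s'" and eq: "\<And>i. i \<le> j \<Longrightarrow> s i = s' i"
  shows "n \<ge> 1 \<Longrightarrow> record_idx s n \<le> j \<Longrightarrow> record_idx s' n = record_idx s n"
proof (induction n)
  case 0 thus ?case by simp
next
  case (Suc n)
  show ?case
  proof (cases "n = 0")
    case True thus ?thesis by simp
  next
    case False
    hence n: "n \<ge> 1" by simp
    let ?a = "record_idx s n" and ?b = "record_idx s (Suc n)"
    have ab: "?a < ?b" "s ?a < s ?b" using record_idx_Suc[OF s(1) n] by auto
    have IH: "record_idx s' n = ?a" using Suc.IH n ab Suc.prems by linarith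
    have eq': "record_idx s' (Suc n) = (LEAST i. i > ?a \<and> s' i > s' ?a)"
      using n IH by simp
    have sab: "s' ?a = s ?a" "s' ?b = s ?b" using eq ab Suc.prems by auto
    show ?thesis unfolding eq'
    proof (rule Least_equality)
      show "?a < ?b \<and> s' ?a < s' ?b" using ab sab by simp
      fix i assume i: "?a < i \<and> s' ?a < s' i"
      show "?b \<le> i"
      proof (rule ccontr)
        assume "\<not> ?b \<le> i"
        hence "s i \<le> s ?a" using record_idx_Suc(3)[OF s(1) n] i by simp
        moreover have "s' i = s i" using eq \<open>\<not> ?b \<le> i\<close> Suc.prems by auto
        ultimately show False using i sab by simp
      qed
    qed
  qed
qed

lemma record_idx_eq_iff_prefix_eq:
  assumes s: "always_exceeded s" "always_exceeded s'" and eq: "\<And>i. i \<le> j \<Longrightarrow> s i = s' i"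
    and n: "n \<ge> 1"
  shows "record_idx s n = j \<longleftrightarrow> record_idx s' n = j"
  using record_idx_eq_if_prefix_eq[OF s eq n] record_idx_eq_if_prefix_eq[OF s(2,1) _ n, of j] eq
  by force

text \<open>Continuing the prefix \<open>y 0, \<dots>, y j\<close> by values above all of it turns the event
  \<open>record_idx s n = j\<close> into a (measurable) function of \<open>s 0, \<dots>, s j\<close> alone.\<close>

definition increasing_extension :: "nat \<Rightarrow> (nat \<Rightarrow> real) \<Rightarrow> nat \<Rightarrow> real" where
  "increasing_extension j y i = (if i \<le> j then y i else real i + (\<Sum>k\<le>j. \<bar>y k\<bar>))"

lemma always_exceeded_increasing_extension: "always_exceeded (increasing_extension j y)"
  unfolding always_exceeded_def
proof
  fix l
  show "\<exists>i>l. increasing_extension j y l < increasing_extension j y i"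
  proof (cases "l \<le> j")
    case True
    have "y l \<le> \<bar>y l\<bar>" by simp
    also have "\<dots> \<le> (\<Sum>k\<le>j. \<bar>y k\<bar>)" using True by (intro member_le_sum) auto
    finally have "y l \<le> (\<Sum>k\<le>j. \<bar>y k\<bar>)" .
    thus ?thesis using True
      by (intro exI[of _ "Suc j"]) (auto simp: increasing_extension_def)
  next
    case False
    thus ?thesis by (intro exI[of _ "Suc l"]) (auto simp: increasing_extension_def)
  qed
qed

lemma record_idx_increasing_extension_iff:
  assumes "always_exceeded s" and "n \<ge> 1"
  shows "record_idx (increasing_extension j s) n = j \<longleftrightarrow> record_idx s n = j"
  by (rule record_idx_eq_iff_prefix_eq[OF always_exceeded_increasing_extension assms(1) _ assms(2)])
     (simp add: increasing_extension_def)

declare record_idx.simps(2)[simp del]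

lemma measurable_record_idx[measurable]:
  assumes [measurable]: "\<And>i. (\<lambda>x. f x i) \<in> borel_measurable N"
  shows "(\<lambda>x. record_idx (f x) n) \<in> measurable N (count_space UNIV)"
proof (induction n)
  case (Suc n)
  note [measurable] = Suc
  have [measurable]: "(\<lambda>x. f x (record_idx (f x) n)) \<in> borel_measurable N"
    by (rule measurable_compose_countable'[where I=UNIV]) auto
  show ?case by (simp add: record_idx.simps)
qed simp

lemma measurable_increasing_extension[measurable]:
  assumes [measurable]: "\<And>i. (\<lambda>x. f x i) \<in> borel_measurable N"
  shows "(\<lambda>x. increasing_extension j (f x) k) \<in> borel_measurable N"
  unfolding increasing_extension_def by (cases "k \<le> j") simp_all

text \<open>Off the index set a component is \<open>undefined\<close>, hence constant; this lets the measurability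
  prover handle the coordinates \<open>y k\<close>, \<open>k \<le> j\<close>, read by \<open>increasing_extension j\<close>.\<close>

lemma measurable_component_PiM_any[measurable]:
  "(\<lambda>z. z i) \<in> borel_measurable (PiM I (\<lambda>_. borel :: real measure))"
proof (cases "i \<in> I")
  case False
  have "z i = undefined" if "z \<in> space (PiM I (\<lambda>_. borel :: real measure))" for z
    using False that by (auto simp: space_PiM PiE_def extensional_def)
  thus ?thesis by (subst measurable_cong[where g="\<lambda>_. undefined"]) auto
qed simp

section \<open>Erlang distribution\<close>

lemma erlang_CDF_le_1: "erlang_CDF k 1 a \<le> 1"
  unfolding erlang_CDF_def by (auto intro!: sum_nonneg)

lemma nn_integral_erlang_density_greaterThan:
  "(\<integral>\<^sup>+s. ennreal (erlang_density k 1 s) * indicator {a<..} s \<partial>lborel) = ennreal (1 - erlang_CDF k 1 a)"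
proof -
  let ?D = "density lborel (erlang_density k 1)"
  interpret D: prob_space ?D by (rule prob_space_erlang_density) simp
  have "(\<integral>\<^sup>+s. ennreal (erlang_density k 1 s) * indicator {a<..} s \<partial>lborel) = emeasure ?D {a<..}"
    by (simp add: emeasure_density)
  also have "\<dots> = ennreal (1 - measure ?D {..a})"
    using D.prob_compl[of "{..a}"] by (simp add: D.emeasure_eq_measure Compl_eq_Diff_UNIV[symmetric])
  also have "measure ?D {..a} = erlang_CDF k 1 a"
    using emeasure_erlang_density[of 1 k a] D.emeasure_eq_measure[of "{..a}"]
    by (simp add: erlang_CDF_nonneg)
  finally show ?thesis .
qed

lemma nn_integral_power_atLeastAtMost:
  assumes "0 \<le> a" "0 \<le> c"
  shows "(\<integral>\<^sup>+s. ennreal (c * s^k / fact k) * indicator {0..a} s \<partial>lborel)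
    = ennreal (c * a^Suc k / fact (Suc k))"
proof -
  have "((\<lambda>s. c * s^Suc k / fact (Suc k)) has_real_derivative c * s^k / fact k) (at s)" for s :: real
  proof (rule DERIV_cong)
    show "((\<lambda>s. c * s^Suc k / fact (Suc k)) has_real_derivative c * (real (Suc k) * s^k) / fact (Suc k)) (at s)"
      by (intro DERIV_cdivide DERIV_cmult) (use DERIV_pow[of "Suc k" s UNIV] in simp)
    show "c * (real (Suc k) * s^k) / fact (Suc k) = c * s^k / fact k"
      by (simp add: fact_Suc del: of_nat_Suc)
  qed
  thus ?thesis using assms
    by (subst nn_integral_FTC_Icc[where F="\<lambda>s. c * s^Suc k / fact (Suc k)"]) auto
qed

text \<open>For \<open>G\<close> with law Gamma(\<open>k+1\<close>,1):
  \<open>E min 1 (exp (G - a)) = P(G > a) + exp (-a) a\<^sup>k\<^sup>+\<^sup>1/(k+1)!\<close>, which is \<open>P(G' > a)\<close> for \<open>G'\<close>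
  with law Gamma(\<open>k+2\<close>,1).\<close>

lemma nn_integral_erlang_min_exp:
  assumes a: "0 \<le> a"
  shows "(\<integral>\<^sup>+s. ennreal (erlang_density k 1 s) * ennreal (min 1 (exp (s - a))) \<partial>lborel)
     = ennreal (1 - erlang_CDF (Suc k) 1 a)"
proof -
  have split: "ennreal (erlang_density k 1 s) * ennreal (min 1 (exp (s - a)))
      = ennreal (erlang_density k 1 s) * indicator {a<..} s
        + ennreal (exp (-a) * s^k / fact k) * indicator {0..a} s" for s
  proof (cases "0 \<le> s \<and> s \<le> a")
    case True
    hence "erlang_density k 1 s * min 1 (exp (s - a)) = exp (-a) * s^k / fact k"
      by (simp add: erlang_density_def exp_diff exp_minus field_simps)
    thus ?thesis using True by (simp add: ennreal_mult'[symmetric])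
  qed (auto simp: erlang_density_def)
  have "(\<integral>\<^sup>+s. ennreal (erlang_density k 1 s) * ennreal (min 1 (exp (s - a))) \<partial>lborel)
      = ennreal (1 - erlang_CDF k 1 a) + ennreal (exp (-a) * a^Suc k / fact (Suc k))"
    unfolding split
    by (subst nn_integral_add) (auto simp: nn_integral_erlang_density_greaterThan nn_integral_power_atLeastAtMost a)
  also have "\<dots> = ennreal (1 - erlang_CDF (Suc k) 1 a)"
    using a erlang_CDF_le_1[of k a] by (subst ennreal_plus[symmetric]) (auto simp: erlang_CDF_def)
  finally show ?thesis .
qed

lemma fact_add_div_fact:
  "fact (k + 1) / fact k = (real k + 1 :: real)"
  "fact (k + 2) / fact k = (real k + 1) * (real k + 2 :: real)"
  "fact (k + 3) / fact k = (real k + 1) * (real k + 2) * (real k + 3 :: real)"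
  "fact (k + 4) / fact k = (real k + 1) * (real k + 2) * (real k + 3) * (real k + 4 :: real)"
  by (simp_all add: numeral_eq_Suc fact_Suc field_simps)

lemma (in prob_space) erlang_centred_fourth_moment:
  assumes D: "distributed M lborel Z (erlang_density k 1)"
  defines "n \<equiv> real (Suc k)"
  shows "integrable M (\<lambda>x. (Z x - n)^4)"
    and "expectation (\<lambda>x. (Z x - n)^4) = 3 * n^2 + 6 * n"
proof -
  have moment: "has_bochner_integral M (\<lambda>x. Z x ^ i) (fact (k + i) / fact k)" for i
    using has_bochner_integral_erlang_ith_moment[OF _ D] by simp
  have expand: "(\<lambda>x. (Z x - n)^4) = (\<lambda>x. Z x ^ 4 + ((- 4 * n) * Z x ^ 3 + ((6 * n^2) * Z x ^ 2
      + ((- 4 * n^3) * Z x ^ 1 + n^4 * Z x ^ 0))))"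
    by (rule ext) (simp add: algebra_simps power2_eq_square power3_eq_cube power4_eq_xxxx)
  have H: "has_bochner_integral M (\<lambda>x. (Z x - n)^4)
      (fact (k + 4) / fact k + ((- 4 * n) * (fact (k + 3) / fact k) + ((6 * n^2) * (fact (k + 2) / fact k)
      + ((- 4 * n^3) * (fact (k + 1) / fact k) + n^4 * (fact (k + 0) / fact k)))))"
    unfolding expand by (intro has_bochner_integral_add has_bochner_integral_mult_right moment)
  also have "fact (k + 4) / fact k + ((- 4 * n) * (fact (k + 3) / fact k) + ((6 * n^2) * (fact (k + 2) / fact k)
      + ((- 4 * n^3) * (fact (k + 1) / fact k) + n^4 * (fact (k + 0) / fact k)))) = 3 * n^2 + 6 * n"
    unfolding fact_add_div_fact n_def
    by (simp add: algebra_simps power2_eq_square power3_eq_cube power4_eq_xxxx)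
  finally show "integrable M (\<lambda>x. (Z x - n)^4)" "expectation (\<lambda>x. (Z x - n)^4) = 3 * n^2 + 6 * n"
    by (auto dest: has_bochner_integral_integral_eq intro: integrable.intros)
qed

lemma (in prob_space) erlang_deviation_bound:
  assumes D: "distributed M lborel Z (erlang_density k 1)" and e: "\<epsilon> > 0"
  defines "n \<equiv> real (Suc k)"
  shows "prob {x\<in>space M. \<epsilon> * n \<le> \<bar>Z x - n\<bar>} \<le> 9 / (\<epsilon>^4 * n^2)"
proof -
  have n: "n \<ge> 1" unfolding n_def by simp
  have c: "0 < (\<epsilon> * n)^4" using e n by simp
  have "\<epsilon> * n \<le> \<bar>y\<bar> \<longleftrightarrow> (\<epsilon> * n)^4 \<le> y^4" for y :: real
    using e n by (subst power_mono_iff[of _ _ 4, symmetric]) (auto simp: power_abs[symmetric])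
  hence "{x\<in>space M. \<epsilon> * n \<le> \<bar>Z x - n\<bar>} = {x\<in>space M. (\<epsilon> * n)^4 \<le> (Z x - n)^4}" by blast
  also have "prob \<dots> \<le> expectation (\<lambda>x. (Z x - n)^4) / (\<epsilon> * n)^4"
    using c erlang_centred_fourth_moment(1)[OF D]
    by (intro integral_Markov_inequality_measure[where A="space M"]) (auto simp: n_def)
  also have "\<dots> = (3 * n^2 + 6 * n) / (\<epsilon> * n)^4"
    using erlang_centred_fourth_moment(2)[OF D] by (simp add: n_def)
  also have "\<dots> \<le> (9 * n^2) / (\<epsilon> * n)^4"
    using n c by (intro divide_right_mono) (auto simp: power2_eq_square)
  also have "\<dots> = 9 / (\<epsilon>^4 * n^2)"
    using n e by (simp add: field_simps power2_eq_square power4_eq_xxxx)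
  finally show ?thesis .
qed

lemma (in prob_space) AE_ratio_tendsto_1:
  assumes [measurable]: "\<And>n. Z n \<in> borel_measurable M"
    and bound: "\<And>\<epsilon>. \<epsilon> > 0 \<Longrightarrow> \<exists>c. \<forall>n\<ge>1. prob {x\<in>space M. \<epsilon> * real n \<le> \<bar>Z n x - real n\<bar>} \<le> c / (real n)^2"
  shows "AE x in M. (\<lambda>n. Z n x / real n) \<longlonglongrightarrow> 1"
proof -
  have "AE x in M. eventually (\<lambda>n. \<bar>Z n x - real n\<bar> < real n / real (Suc m)) sequentially" for m
  proof -
    define B where "B n = {x\<in>space M. real n / real (Suc m) \<le> \<bar>Z n x - real n\<bar>}" for n
    obtain c where c: "\<And>n. n \<ge> 1 \<Longrightarrow> measure M (B n) \<le> c / (real n)^2"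
      using bound[of "1 / real (Suc m)"] unfolding B_def by auto
    have "summable (\<lambda>n. c * inverse (real n ^ 2))"
      by (intro summable_mult inverse_power_summable) simp
    hence "summable (\<lambda>n. measure M (B n))"
      by (rule summable_comparison_test'[where N=1]) (use c in \<open>simp add: field_simps\<close>)
    hence "AE x in M. eventually (\<lambda>n. x \<in> space M - B n) sequentially"
      by (intro borel_cantelli_AE1) (auto simp: B_def emeasure_eq_measure)
    thus ?thesis by (rule eventually_mono) (auto elim!: eventually_mono simp: B_def not_le)
  qed
  hence "AE x in M. \<forall>m. eventually (\<lambda>n. \<bar>Z n x - real n\<bar> < real n / real (Suc m)) sequentially"
    by (subst AE_all_countable) auto
  thus ?thesis
  proof (rule eventually_mono)
    fix x assume H: "\<forall>m. eventually (\<lambda>n. \<bar>Z n x - real n\<bar> < real n / real (Suc m)) sequentially"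
    show "(\<lambda>n. Z n x / real n) \<longlonglongrightarrow> 1"
    proof (rule tendstoI)
      fix r :: real assume "r > 0"
      then obtain m where m: "inverse (real (Suc m)) < r" using reals_Archimedean by blast
      have close: "dist (Z n x / real n) 1 < r" if "n \<ge> 1" "\<bar>Z n x - real n\<bar> < real n / real (Suc m)" for n
      proof -
        have "dist (Z n x / real n) 1 = \<bar>Z n x - real n\<bar> / real n"
          using that by (simp add: dist_real_def field_simps)
        also have "\<dots> < 1 / real (Suc m)" using that by (simp add: field_simps)
        finally show ?thesis using m by (simp add: inverse_eq_divide)
      qed
      show "eventually (\<lambda>n. dist (Z n x / real n) 1 < r) sequentially"
        using eventually_conj[OF eventually_ge_at_top[of 1] H[rule_format, of m]]
        by (rule eventually_mono) (blast intro: close)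
    qed
  qed
qed

section \<open>Records of an i.i.d. sequence with continuous tail\<close>

lemma suminf_ennreal_geometric:
  assumes "0 < p" "p \<le> 1" "0 \<le> c"
  shows "(\<Sum>m. ennreal ((1 - p)^m * c)) = ennreal (c / p)"
proof (rule suminf_ennreal_eq)
  show "\<And>i. 0 \<le> (1 - p)^i * c" using assms by simp
  have "(\<lambda>m. (1 - p)^m) sums (1 / (1 - (1 - p)))" by (rule geometric_sums) (use assms in auto)
  hence "(\<lambda>m. (1 - p)^m * c) sums (1 / (1 - (1 - p)) * c)" by (rule sums_mult2)
  thus "(\<lambda>m. (1 - p)^m * c) sums (c / p)" by simp
qed

lemma (in prob_space) emeasure_indep_var_pair:
  assumes ind: "indep_var S Y T Z" and C: "C \<in> sets (S \<Otimes>\<^sub>M T)"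
  shows "emeasure M {x\<in>space M. (Y x, Z x) \<in> C}
    = (\<integral>\<^sup>+x. emeasure M {x'\<in>space M. (Y x, Z x') \<in> C} \<partial>M)"
proof -
  have Ym[measurable]: "Y \<in> measurable M S" using indep_var_rv1[OF ind] .
  have Zm[measurable]: "Z \<in> measurable M T" using indep_var_rv2[OF ind] .
  interpret Tz: prob_space "distr M T Z" by (rule prob_space_distr) simp
  have "sets (distr M S Y \<Otimes>\<^sub>M distr M T Z) = sets (S \<Otimes>\<^sub>M T)"
    by (rule sets_pair_measure_cong) simp_all
  hence C': "C \<in> sets (distr M S Y \<Otimes>\<^sub>M distr M T Z)" using C by simp
  have inner: "emeasure (distr M T Z) (Pair y -` C) = emeasure M {x'\<in>space M. (y, Z x') \<in> C}" for y
    by (subst emeasure_distr[OF Zm sets_Pair1[OF C]]) (auto intro: arg_cong[where f="emeasure M"])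
  have "emeasure M {x\<in>space M. (Y x, Z x) \<in> C} = emeasure (distr M (S \<Otimes>\<^sub>M T) (\<lambda>x. (Y x, Z x))) C"
    using C by (subst emeasure_distr) (auto intro: arg_cong[where f="emeasure M"])
  also have "\<dots> = emeasure (distr M S Y \<Otimes>\<^sub>M distr M T Z) C"
    using ind[unfolded indep_var_distribution_eq] by simp
  also have "\<dots> = (\<integral>\<^sup>+y. emeasure (distr M T Z) (Pair y -` C) \<partial>distr M S Y)"
    by (rule Tz.emeasure_pair_measure_alt[OF C'])
  also have "\<dots> = (\<integral>\<^sup>+x. emeasure (distr M T Z) (Pair (Y x) -` C) \<partial>M)"
    using Tz.measurable_emeasure_Pair[OF C'] by (intro nn_integral_distr) simp_all
  finally show ?thesis by (simp only: inner)
qed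

text \<open>If the tail vanished beyond some \<open>u\<close>, then there \<open>invtail = 1 / 0 = 0\<close>, so the ratio
  \<open>invtail (u * 1) / invtail u\<close> would eventually be \<open>0 / 0 = 0\<close> rather than tend to \<open>1\<close>.\<close>

lemma (in prob_space) tail_pos_if_invtail_ratio_tendsto_1:
  assumes rv: "Y \<in> borel_measurable M"
    and ratio: "((\<lambda>u. invtail M Y (u * 1) / invtail M Y u) \<longlongrightarrow> 1) at_top"
  shows "prob {x\<in>space M. Y x > u} > 0"
proof (rule ccontr)
  assume "\<not> prob {x\<in>space M. Y x > u} > 0"
  have vanish: "prob {x\<in>space M. Y x > v} = 0" if "u \<le> v" for v
  proof -
    have "prob {x\<in>space M. Y x > v} \<le> prob {x\<in>space M. Y x > u}"
      using that rv by (intro finite_measure_mono) auto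
    thus ?thesis using \<open>\<not> prob {x\<in>space M. Y x > u} > 0\<close> by (simp add: antisym)
  qed
  have "eventually (\<lambda>v. invtail M Y (v * 1) / invtail M Y v = 0) at_top"
    using eventually_ge_at_top[of u] by (rule eventually_mono) (simp add: invtail_def vanish)
  hence "((\<lambda>u. invtail M Y (u * 1) / invtail M Y u) \<longlongrightarrow> 0) at_top"
    by (rule tendsto_eventually)
  from tendsto_unique[OF _ ratio this] show False by simp
qed

locale iid_continuous_tail = prob_space M for M :: "'a measure" +
  fixes X :: "nat \<Rightarrow> 'a \<Rightarrow> real"
  assumes rv[measurable]: "\<And>i. X i \<in> borel_measurable M"
    and indep: "indep_vars (\<lambda>_. borel) X UNIV"
    and ident: "\<And>i. distr M borel (X i) = distr M borel (X 0)"
    and pos: "AE x in M. X 0 x > 0"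
    and tail_pos: "\<And>u. prob {x\<in>space M. X 0 x > u} > 0"
    and tail_cont: "continuous_on UNIV (\<lambda>u. prob {x\<in>space M. X 0 x > u})"
begin

definition surv :: "real \<Rightarrow> real" where
  "surv u = prob {x\<in>space M. X 0 x > u}"

definition logtail :: "real \<Rightarrow> real" where
  "logtail v = - ln (surv v)"

abbreviation record_val :: "nat \<Rightarrow> 'a \<Rightarrow> real" where
  "record_val n x \<equiv> X (record_idx (\<lambda>i. X i x) n) x"

lemma surv_pos: "surv u > 0"
  unfolding surv_def by (rule tail_pos)

lemma surv_le_1: "surv u \<le> 1"
  unfolding surv_def by simp

lemma surv_antimono: "u \<le> v \<Longrightarrow> surv v \<le> surv u"
  unfolding surv_def by (intro finite_measure_mono) auto

lemma surv_0: "surv 0 = 1"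
  unfolding surv_def using pos by (subst prob_Collect_eq_1) auto

lemma continuous_on_surv: "continuous_on UNIV surv"
  using tail_cont by (simp add: surv_def[abs_def])

lemma measurable_surv[measurable]: "surv \<in> borel_measurable borel"
  by (rule borel_measurable_continuous_onI[OF continuous_on_surv])

lemma measurable_logtail[measurable]: "logtail \<in> borel_measurable borel"
  unfolding logtail_def[abs_def] by measurable

lemma measurable_record[measurable]: "(\<lambda>x. record_val n x) \<in> borel_measurable M"
  by (rule measurable_compose_countable'[where I=UNIV]) auto

lemma prob_X_greater: "prob {x\<in>space M. X i x > u} = surv u"
proof -
  have "prob {x\<in>space M. X j x > u} = measure (distr M borel (X j)) {u<..}" for j
    by (subst measure_distr) (auto intro: arg_cong[where f="measure M"])
  thus ?thesis unfolding surv_def by (metis ident)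
qed

lemma prob_X_le: "prob {x\<in>space M. X i x \<le> u} = 1 - surv u"
proof -
  have "{x\<in>space M. X i x \<le> u} = space M - {x\<in>space M. X i x > u}" by auto
  thus ?thesis by (simp add: prob_compl prob_X_greater)
qed

lemma surv_less: assumes "p > 0" shows "\<exists>u. surv u < p"
proof -
  let ?A = "\<lambda>n::nat. {x\<in>space M. X 0 x > real n}"
  have "(\<lambda>n. prob (?A n)) \<longlonglongrightarrow> prob (\<Inter>n. ?A n)"
    by (rule finite_Lim_measure_decseq) (auto simp: decseq_def)
  moreover have "(\<Inter>n. ?A n) = {}"
  proof safe
    fix x assume x: "x \<in> (\<Inter>n. ?A n)"
    obtain n where "X 0 x < real n" using reals_Archimedean2 by blast
    moreover have "real n < X 0 x" using x by blast
    ultimately show "x \<in> {}" by simp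
  qed
  ultimately have "(\<lambda>n. surv (real n)) \<longlonglongrightarrow> 0" by (simp add: surv_def)
  from order_tendstoD(2)[OF this assms] show ?thesis
    by (auto simp: eventually_sequentially)
qed

text \<open>The largest \<open>w\<close> with \<open>surv w \<ge> p\<close> satisfies \<open>surv w = p\<close> by continuity.\<close>

lemma surv_level:
  assumes p: "0 < p" "p \<le> 1"
  shows "\<exists>w. surv w = p \<and> (\<forall>v. surv v < p \<longleftrightarrow> w < v)"
proof -
  let ?S = "{u. p \<le> surv u}"
  obtain u1 where u1: "surv u1 < p" using surv_less p by blast
  have ne: "?S \<noteq> {}" using surv_0 p by (auto intro!: exI[of _ 0])
  have bdd: "bdd_above ?S"
  proof (rule bdd_aboveI)
    fix x assume "x \<in> ?S"
    thus "x \<le> u1" using u1 surv_antimono[of u1 x] by (cases "x \<le> u1") auto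
  qed
  have cl: "closed ?S"
    using closed_Collect_le[OF continuous_on_const continuous_on_surv, of p] by simp
  define w where "w = Sup ?S"
  have wS: "p \<le> surv w" using closed_contains_Sup[OF ne bdd cl] w_def by simp
  have gt: "surv v < p" if "w < v" for v
  proof (rule ccontr)
    assume "\<not> surv v < p"
    hence "v \<le> w" unfolding w_def using bdd by (intro cSup_upper) simp_all
    thus False using that by simp
  qed
  have "surv w \<le> p"
  proof (rule ccontr)
    assume "\<not> surv w \<le> p"
    have "(surv \<longlongrightarrow> surv w) (at_right w)"
      using continuous_on_surv by (simp add: continuous_on_eq_continuous_at isCont_def filterlim_at_split)
    from order_tendstoD(1)[OF this, of p] \<open>\<not> surv w \<le> p\<close>
    obtain b where "w < b" "\<And>v. w < v \<Longrightarrow> v < b \<Longrightarrow> surv v > p"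
      by (auto simp: eventually_at_right_field)
    hence "surv ((w + b)/2) > p" by simp
    with gt[of "(w + b)/2"] \<open>w < b\<close> show False by simp
  qed
  hence "surv w = p" using wS by simp
  moreover have "surv v < p \<longleftrightarrow> w < v" for v
    using gt surv_antimono[of v w] \<open>surv w = p\<close> by (cases "w < v") auto
  ultimately show ?thesis by blast
qed

lemma logtail_level:
  assumes "t \<ge> 0"
  shows "\<exists>w. surv w = exp (- t) \<and> (\<forall>v. t < logtail v \<longleftrightarrow> w < v)"
proof -
  obtain w where w: "surv w = exp (-t)" "\<And>v. surv v < exp (-t) \<longleftrightarrow> w < v"
    using surv_level[of "exp (-t)"] assms by auto
  have "t < logtail v \<longleftrightarrow> ln (surv v) < ln (exp (-t))" for v
    unfolding logtail_def by auto
  also have "\<dots> v \<longleftrightarrow> surv v < exp (-t)" for v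
    using surv_pos[of v] by (subst ln_less_cancel_iff) auto
  finally have "t < logtail v \<longleftrightarrow> surv v < exp (-t)" for v .
  thus ?thesis using w by blast
qed

lemma prob_eventually_below: "prob {x\<in>space M. \<forall>i>j. X i x \<le> q} = 0"
proof -
  let ?r = "1 - surv q"
  have r: "0 \<le> ?r" "?r < 1" using surv_pos[of q] surv_le_1[of q] by auto
  have bound: "prob {x\<in>space M. \<forall>i>j. X i x \<le> q} \<le> ?r ^ Suc m" for m
  proof -
    let ?J = "{j<..j + Suc m}"
    have "prob {x\<in>space M. \<forall>i>j. X i x \<le> q} \<le> prob (\<Inter>i\<in>?J. X i -` {..q} \<inter> space M)"
      by (intro finite_measure_mono) auto
    also have "\<dots> = (\<Prod>i\<in>?J. prob (X i -` {..q} \<inter> space M))"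
      by (rule indep_varsD[OF indep]) auto
    also have "\<dots> = (\<Prod>i\<in>?J. ?r)"
      using prob_X_le by (intro prod.cong refl) (simp add: vimage_def Int_def conj_commute)
    finally show ?thesis by simp
  qed
  have "(\<lambda>m. ?r ^ Suc m) \<longlonglongrightarrow> 0"
    by (rule LIMSEQ_Suc[OF LIMSEQ_power_zero]) (use r in auto)
  hence "prob {x\<in>space M. \<forall>i>j. X i x \<le> q} \<le> 0"
    using bound by (intro tendsto_lowerbound[where F=sequentially]) (auto intro: always_eventually)
  thus ?thesis by (simp add: antisym)
qed

lemma AE_always_exceeded: "AE x in M. always_exceeded (\<lambda>i. X i x)"
proof -
  have "AE x in M. \<forall>q::rat. \<forall>j::nat. \<exists>i>j. X i x > real_of_rat q"
  proof (intro AE_all_countable[THEN iffD2] allI)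
    fix q :: rat and j :: nat
    have "AE x in M. x \<notin> {x\<in>space M. \<forall>i>j. X i x \<le> real_of_rat q}"
      using prob_eventually_below[of j "real_of_rat q"] by (subst prob_eq_0[symmetric]) auto
    then show "AE x in M. \<exists>i>j. X i x > real_of_rat q"
      by (rule AE_mp[OF AE_space, OF eventually_mono]) (auto simp: not_le)
  qed
  then show ?thesis
  proof (rule eventually_mono)
    fix x assume H: "\<forall>q::rat. \<forall>j::nat. \<exists>i>j. X i x > real_of_rat q"
    show "always_exceeded (\<lambda>i. X i x)" unfolding always_exceeded_def
    proof
      fix j
      obtain q where "X j x < real_of_rat q"
        using Rats_dense_in_real[of "X j x" "X j x + 1"] by (auto elim: Rats_cases)
      moreover obtain i where "i > j" "real_of_rat q < X i x" using H by blast
      ultimately show "\<exists>i>j. X j x < X i x" by (intro exI[of _ i]) simp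
    qed
  qed
qed

lemma emeasure_below_then_above:
  "emeasure M {x\<in>space M. (\<forall>k\<in>{1..m}. X (j+k) x \<le> v) \<and> w < X (j+Suc m) x}
     = ennreal ((1 - surv v)^m * surv w)"
proof -
  let ?J = "{j<..j+Suc m}"
  define A where "A i = (if i = j + Suc m then {w<..} else {..v})" for i
  have "{x\<in>space M. (\<forall>k\<in>{1..m}. X (j+k) x \<le> v) \<and> w < X (j+Suc m) x}
      = (\<Inter>i\<in>?J. X i -` A i \<inter> space M)"
  proof -
    have shift: "{j<..j+m} = (+) j ` {1..m}"
      by (simp add: image_add_atLeastAtMost atLeastSucAtMost_greaterThanAtMost[symmetric])
    have "(\<forall>k\<in>{1..m}. X (j+k) x \<le> v) \<longleftrightarrow> (\<forall>i\<in>{j<..j+m}. X i x \<le> v)" for x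
      unfolding shift by blast
    moreover have "?J = insert (j + Suc m) {j<..j+m}" by auto
    ultimately show ?thesis by (auto simp: A_def)
  qed
  also have "prob \<dots> = (\<Prod>i\<in>?J. prob (X i -` A i \<inter> space M))"
    by (rule indep_varsD[OF indep]) (auto simp: A_def)
  also have "\<dots> = surv w * (1 - surv v)^m"
  proof -
    have "?J = insert (j + Suc m) {j<..j+m}" by auto
    moreover have "X (j + Suc m) -` A (j + Suc m) \<inter> space M = {x\<in>space M. X (j+Suc m) x > w}"
      by (auto simp: A_def)
    moreover have "X i -` A i \<inter> space M = {x\<in>space M. X i x \<le> v}" if "i \<in> {j<..j+m}" for i
      using that by (auto simp: A_def)
    ultimately show ?thesis by (simp add: prob_X_greater prob_X_le)
  qed
  finally show ?thesis by (simp add: emeasure_eq_measure mult.commute)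
qed

definition record_run :: "real \<Rightarrow> nat \<Rightarrow> nat \<Rightarrow> nat \<Rightarrow> 'a set" where
  "record_run u n j m = {x\<in>space M. record_idx (increasing_extension j (\<lambda>i. X i x)) n = j \<and>
     (\<forall>k\<in>{1..m}. X (j+k) x \<le> X j x) \<and> max u (X j x) < X (j+Suc m) x}"

lemma sets_record_run[measurable]: "record_run u n j m \<in> sets M"
  unfolding record_run_def by measurable

lemma emeasure_record_run:
  "emeasure M (record_run u n j m)
   = (\<integral>\<^sup>+x. (if record_idx (increasing_extension j (\<lambda>i. X i x)) n = j
          then ennreal ((1 - surv (X j x))^m * surv (max u (X j x))) else 0) \<partial>M)"
proof -
  let ?S = "PiM {..j} (\<lambda>_. borel :: real measure)"
  let ?T = "PiM {j<..j+Suc m} (\<lambda>_. borel :: real measure)"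
  define Y where "Y x = restrict (\<lambda>i. X i x) {..j}" for x
  define Z where "Z x = restrict (\<lambda>i. X i x) {j<..j+Suc m}" for x
  have ind: "indep_var ?S Y ?T Z"
    unfolding Y_def Z_def by (rule indep_var_restrict[OF indep]) auto
  have Y[measurable]: "Y \<in> measurable M ?S" and Z[measurable]: "Z \<in> measurable M ?T"
    using indep_var_rv1[OF ind] indep_var_rv2[OF ind] .
  define P where "P y \<longleftrightarrow> record_idx (increasing_extension j y) n = j" for y
  have P_Y: "P (Y x) \<longleftrightarrow> record_idx (increasing_extension j (\<lambda>i. X i x)) n = j" for x
    unfolding P_def by (rule arg_cong[where f="\<lambda>y. record_idx y n = j"])
      (auto simp: increasing_extension_def Y_def fun_eq_iff intro!: sum.cong)
  have [measurable]: "Measurable.pred ?S P"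
    unfolding P_def by measurable
  define C where "C = {p \<in> space (?S \<Otimes>\<^sub>M ?T). P (fst p) \<and>
      (\<forall>k\<in>{1..m}. snd p (j+k) \<le> fst p j) \<and> max u (fst p j) < snd p (j + Suc m)}"
  have C: "C \<in> sets (?S \<Otimes>\<^sub>M ?T)" unfolding C_def by measurable
  have mem_C: "(Y x, Z x') \<in> C \<longleftrightarrow> P (Y x) \<and>
      (\<forall>k\<in>{1..m}. X (j+k) x' \<le> X j x) \<and> max u (X j x) < X (j + Suc m) x'"
    if "x \<in> space M" "x' \<in> space M" for x x'
    using measurable_space[OF Y that(1)] measurable_space[OF Z that(2)]
    by (auto simp: C_def space_pair_measure) (auto simp: Y_def Z_def)
  have "record_run u n j m = {x\<in>space M. (Y x, Z x) \<in> C}"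
    unfolding record_run_def by (auto simp: mem_C P_Y)
  also have "emeasure M \<dots> = (\<integral>\<^sup>+x. emeasure M {x'\<in>space M. (Y x, Z x') \<in> C} \<partial>M)"
    by (rule emeasure_indep_var_pair[OF ind C])
  also have "\<dots> = (\<integral>\<^sup>+x. (if record_idx (increasing_extension j (\<lambda>i. X i x)) n = j
          then ennreal ((1 - surv (X j x))^m * surv (max u (X j x))) else 0) \<partial>M)"
  proof (rule nn_integral_cong)
    fix x assume x: "x \<in> space M"
    have "{x'\<in>space M. (Y x, Z x') \<in> C} = (if P (Y x) then
        {x'\<in>space M. (\<forall>k\<in>{1..m}. X (j+k) x' \<le> X j x) \<and> max u (X j x) < X (j+Suc m) x'} else {})"
      using mem_C[OF x] by auto
    also have "emeasure M \<dots> = (if record_idx (increasing_extension j (\<lambda>i. X i x)) n = j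
          then ennreal ((1 - surv (X j x))^m * surv (max u (X j x))) else 0)"
      by (cases "P (Y x)") (simp_all only: P_Y emeasure_below_then_above emeasure_empty if_True if_False simp_thms)
    finally show "emeasure M {x'\<in>space M. (Y x, Z x') \<in> C} = (if record_idx (increasing_extension j (\<lambda>i. X i x)) n = j
          then ennreal ((1 - surv (X j x))^m * surv (max u (X j x))) else 0)" .
  qed
  finally show ?thesis .
qed

lemma indicator_next_record_exceeds:
  assumes s: "always_exceeded (\<lambda>i. X i x)" and x: "x \<in> space M" and n: "n \<ge> 1"
  shows "indicator {x\<in>space M. u < record_val (Suc n) x} x
     = (\<Sum>j. \<Sum>m. indicator (record_run u n j m) x :: ennreal)"
proof -
  let ?a = "record_idx (\<lambda>i. X i x) n" and ?b = "record_idx (\<lambda>i. X i x) (Suc n)"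
  have ab: "?a < ?b" "X ?a x < X ?b x" using record_idx_Suc[OF s n] by auto
  have between: "\<And>i. ?a < i \<Longrightarrow> i < ?b \<Longrightarrow> X i x \<le> X ?a x" using record_idx_Suc(3)[OF s n] by blast
  have at_j: "record_idx (increasing_extension j (\<lambda>i. X i x)) n = j \<longleftrightarrow> j = ?a" for j
    using record_idx_increasing_extension_iff[OF s n, of j] by auto
  define m0 where "m0 = ?b - ?a - 1"
  have m0: "?a + Suc m0 = ?b" using ab unfolding m0_def by simp
  have not_m0: "x \<notin> record_run u n ?a m" if "m \<noteq> m0" for m
  proof (cases "?a + Suc m < ?b")
    case True
    thus ?thesis using between[of "?a + Suc m"] by (auto simp: record_run_def)
  next
    case False
    hence "?b - ?a \<in> {1..m}" using that m0 by auto
    thus ?thesis using ab unfolding record_run_def by fastforce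
  qed
  have "\<forall>k\<in>{1..m0}. X (?a+k) x \<le> X ?a x" using between m0 by auto
  hence at_m0: "x \<in> record_run u n ?a m0 \<longleftrightarrow> u < X ?b x"
    using x ab m0 at_j[of ?a] unfolding record_run_def by auto
  have "(\<Sum>j. \<Sum>m. indicator (record_run u n j m) x :: ennreal)
      = (\<Sum>m. indicator (record_run u n ?a m) x)"
    by (subst suminf_finite[where N="{?a}"]) (auto simp: record_run_def at_j)
  also have "\<dots> = indicator (record_run u n ?a m0) x"
    by (subst suminf_finite[where N="{m0}"]) (auto dest: not_m0)
  finally show ?thesis using x at_m0 by (simp add: indicator_def)
qed

lemma emeasure_next_record_exceeds_sum:
  assumes n: "n \<ge> 1"
  shows "emeasure M {x\<in>space M. u < record_val (Suc n) x}
    = (\<Sum>j. \<integral>\<^sup>+x. (if record_idx (increasing_extension j (\<lambda>i. X i x)) n = j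
          then ennreal (surv (max u (X j x)) / surv (X j x)) else 0) \<partial>M)"
proof -
  have "emeasure M {x\<in>space M. u < record_val (Suc n) x}
      = (\<integral>\<^sup>+x. indicator {x\<in>space M. u < record_val (Suc n) x} x \<partial>M)"
    by (rule nn_integral_indicator[symmetric]) measurable
  also have "\<dots> = (\<integral>\<^sup>+x. (\<Sum>j. \<Sum>m. indicator (record_run u n j m) x) \<partial>M)"
    using AE_always_exceeded AE_space
    by (intro nn_integral_cong_AE, eventually_elim) (rule indicator_next_record_exceeds[OF _ _ n])
  also have "\<dots> = (\<Sum>j. \<Sum>m. \<integral>\<^sup>+x. indicator (record_run u n j m) x \<partial>M)"
    by (subst nn_integral_suminf, measurable, intro suminf_cong nn_integral_suminf) measurable
  also have "\<dots> = (\<Sum>j. \<Sum>m. \<integral>\<^sup>+x. (if record_idx (increasing_extension j (\<lambda>i. X i x)) n = j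
          then ennreal ((1 - surv (X j x))^m * surv (max u (X j x))) else 0) \<partial>M)"
    by (intro suminf_cong) (simp add: emeasure_record_run)
  also have "\<dots> = (\<Sum>j. \<integral>\<^sup>+x. (\<Sum>m. (if record_idx (increasing_extension j (\<lambda>i. X i x)) n = j
          then ennreal ((1 - surv (X j x))^m * surv (max u (X j x))) else 0)) \<partial>M)"
    by (intro suminf_cong nn_integral_suminf[symmetric]) measurable
  also have "\<dots> = (\<Sum>j. \<integral>\<^sup>+x. (if record_idx (increasing_extension j (\<lambda>i. X i x)) n = j
          then ennreal (surv (max u (X j x)) / surv (X j x)) else 0) \<partial>M)"
    using suminf_ennreal_geometric[OF surv_pos surv_le_1 less_imp_le[OF surv_pos]]
    by (intro suminf_cong nn_integral_cong) simp
  finally show ?thesis .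
qed

lemma emeasure_next_record_exceeds:
  assumes n: "n \<ge> 1"
  shows "emeasure M {x\<in>space M. u < record_val (Suc n) x}
    = (\<integral>\<^sup>+x. ennreal (surv (max u (record_val n x)) / surv (record_val n x)) \<partial>M)"
proof -
  have "(\<Sum>j. (if record_idx (increasing_extension j (\<lambda>i. X i x)) n = j
          then ennreal (surv (max u (X j x)) / surv (X j x)) else 0))
      = ennreal (surv (max u (record_val n x)) / surv (record_val n x))"
    if "always_exceeded (\<lambda>i. X i x)" for x
    using record_idx_increasing_extension_iff[OF that n]
    by (subst suminf_finite[where N="{record_idx (\<lambda>i. X i x) n}"]) auto
  hence "AE x in M. (\<Sum>j. (if record_idx (increasing_extension j (\<lambda>i. X i x)) n = j
          then ennreal (surv (max u (X j x)) / surv (X j x)) else 0))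
      = ennreal (surv (max u (record_val n x)) / surv (record_val n x))"
    using AE_always_exceeded by (auto elim: eventually_mono)
  thus ?thesis
    unfolding emeasure_next_record_exceeds_sum[OF n]
    by (subst nn_integral_suminf[symmetric]) (measurable, rule nn_integral_cong_AE)
qed

lemma surv_ratio_eq_min_exp:
  assumes w: "surv w = exp (-a)" "\<And>v. a < logtail v \<longleftrightarrow> w < v"
  shows "surv (max w v) / surv v = min 1 (exp (logtail v - a))"
proof -
  have e: "exp (logtail v - a) = surv w / surv v"
    using surv_pos[of v] w(1) by (simp add: logtail_def exp_diff exp_minus field_simps)
  show ?thesis
  proof (cases "w < v")
    case True
    hence "1 < exp (logtail v - a)" using w(2) by simp
    thus ?thesis using True surv_pos[of v] by simp
  next
    case False
    hence "surv w / surv v \<le> 1" using surv_antimono surv_pos[of v] by simp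
    thus ?thesis using False e by simp
  qed
qed

lemma prob_logtail_record_le:
  assumes "0 \<le> a"
  obtains w where "\<And>n. prob {x\<in>space M. logtail (record_val n x) \<le> a}
      = 1 - prob {x\<in>space M. w < record_val n x}"
    and "surv w = exp (-a)" "\<And>v. a < logtail v \<longleftrightarrow> w < v"
proof -
  obtain w where w: "surv w = exp (-a)" "\<And>v. a < logtail v \<longleftrightarrow> w < v"
    using logtail_level[OF assms] by blast
  have "{x\<in>space M. logtail (record_val n x) \<le> a} = space M - {x\<in>space M. w < record_val n x}" for n
    using w(2) by (auto simp: not_less[symmetric])
  hence "prob {x\<in>space M. logtail (record_val n x) \<le> a} = 1 - prob {x\<in>space M. w < record_val n x}" for n
    by (simp add: prob_compl)
  thus thesis by (rule that[OF _ w])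
qed

lemma logtail_record_erlang:
  assumes "n \<ge> 1"
  shows "distributed M lborel (\<lambda>x. logtail (record_val n x)) (erlang_density (n - 1) 1)"
  using assms
proof (induction n rule: dec_induct)
  case base
  show ?case
  proof (rule erlang_distributedI)
    fix a :: real assume a: "0 \<le> a"
    then obtain w where "prob {x\<in>space M. logtail (record_val 1 x) \<le> a}
        = 1 - prob {x\<in>space M. w < record_val 1 x}" and "surv w = exp (-a)"
      by (rule prob_logtail_record_le) blast
    hence "prob {x\<in>space M. logtail (record_val 1 x) \<le> a} = erlang_CDF 0 1 a"
      using a by (simp add: record_idx.simps prob_X_greater erlang_CDF_def)
    thus "emeasure M {x\<in>space M. logtail (record_val 1 x) \<le> a} = erlang_CDF (1 - 1) 1 a"
      by (simp add: emeasure_eq_measure)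
  qed simp_all
next
  case (step n)
  then obtain k where k: "n = Suc k" by (cases n) auto
  show ?case
  proof (rule erlang_distributedI)
    fix a :: real assume a: "0 \<le> a"
    then obtain w where le: "prob {x\<in>space M. logtail (record_val (Suc n) x) \<le> a}
        = 1 - prob {x\<in>space M. w < record_val (Suc n) x}"
      and w: "surv w = exp (-a)" "\<And>v. a < logtail v \<longleftrightarrow> w < v"
      by (rule prob_logtail_record_le) blast
    have "ennreal (prob {x\<in>space M. w < record_val (Suc n) x})
        = (\<integral>\<^sup>+x. ennreal (min 1 (exp (logtail (record_val n x) - a))) \<partial>M)"
      using step.hyps
      by (simp add: emeasure_next_record_exceeds surv_ratio_eq_min_exp[OF w] emeasure_eq_measure[symmetric])
    also have "\<dots> = (\<integral>\<^sup>+s. ennreal (erlang_density k 1 s) * ennreal (min 1 (exp (s - a))) \<partial>lborel)"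
      using step.IH k by (subst distributed_nn_integral[symmetric]) auto
    also have "\<dots> = ennreal (1 - erlang_CDF n 1 a)"
      using nn_integral_erlang_min_exp[OF a, of k] k by simp
    finally have "prob {x\<in>space M. logtail (record_val (Suc n) x) \<le> a} = erlang_CDF n 1 a"
      using le erlang_CDF_le_1[of n a] by (subst (asm) ennreal_inj) auto
    thus "emeasure M {x\<in>space M. logtail (record_val (Suc n) x) \<le> a} = erlang_CDF (Suc n - 1) 1 a"
      by (simp add: emeasure_eq_measure)
  qed simp_all
qed

lemma logtail_record_deviation_bound:
  assumes "n \<ge> 1" "\<epsilon> > 0"
  shows "prob {x\<in>space M. \<epsilon> * real n \<le> \<bar>logtail (record_val n x) - real n\<bar>} \<le> 9 / \<epsilon>^4 / (real n)^2"
  using erlang_deviation_bound[OF logtail_record_erlang, of n \<epsilon>] assms by simp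

lemma logtail_record_deviation_rate:
  assumes "\<epsilon> > 0"
  shows "\<exists>c>0. \<forall>n::nat. n \<ge> 1 \<longrightarrow>
    prob {x\<in>space M. \<epsilon> * real n \<le> \<bar>logtail (record_val n x) - real n\<bar>} < c / (real n)^2"
proof (intro exI[of _ "10 / \<epsilon>^4"] conjI allI impI)
  fix n :: nat assume "n \<ge> 1"
  have "9 / \<epsilon>^4 / (real n)^2 < 10 / \<epsilon>^4 / (real n)^2"
    using assms \<open>n \<ge> 1\<close> by (intro divide_strict_right_mono) auto
  with logtail_record_deviation_bound[OF \<open>n \<ge> 1\<close> assms]
  show "prob {x\<in>space M. \<epsilon> * real n \<le> \<bar>logtail (record_val n x) - real n\<bar>} < 10 / \<epsilon>^4 / (real n)^2"
    by linarith
qed (use assms in simp)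

lemma AE_logtail_record_ratio: "AE x in M. (\<lambda>n. logtail (record_val n x) / real n) \<longlonglongrightarrow> 1"
proof (rule AE_ratio_tendsto_1)
  fix \<epsilon> :: real assume "\<epsilon> > 0"
  thus "\<exists>c. \<forall>n\<ge>1. prob {x\<in>space M. \<epsilon> * real n \<le> \<bar>logtail (record_val n x) - real n\<bar>} \<le> c / (real n)^2"
    using logtail_record_deviation_bound by blast
qed measurable

end

lemma (in prob_space) iid_continuous_tail_if_invtail_continuous:
  assumes rv: "\<And>i. X i \<in> borel_measurable M"
    and "indep_vars (\<lambda>_. borel) X UNIV" "\<And>i. distr M borel (X i) = distr M borel (X 0)"
    and "AE x in M. X 0 x > 0"
    and ratio: "((\<lambda>u. invtail M (X 0) (u * 1) / invtail M (X 0) u) \<longlongrightarrow> 1) at_top"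
    and cont: "continuous_on UNIV (invtail M (X 0))"
  shows "iid_continuous_tail M X"
proof -
  have tail_pos: "prob {x\<in>space M. X 0 x > u} > 0" for u
    by (rule tail_pos_if_invtail_ratio_tendsto_1[OF rv ratio])
  have "continuous_on UNIV (\<lambda>u. 1 / invtail M (X 0) u)"
    using tail_pos by (intro continuous_intros cont) (auto simp: invtail_def less_le)
  hence "continuous_on UNIV (\<lambda>u. prob {x\<in>space M. X 0 x > u})"
    by (simp add: invtail_def)
  with assms tail_pos show ?thesis by unfold_locales
qed

theorem lemma3p4:
  fixes M :: "'a measure" and X :: "nat \<Rightarrow> 'a \<Rightarrow> real"
  assumes P: "prob_space M"
    and rv: "\<And>i. X i \<in> borel_measurable M"
    and indep: "prob_space.indep_vars M (\<lambda>_. borel) X UNIV"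
    and ident: "\<And>i. distr M borel (X i) = distr M borel (X 0)"
    and pos: "AE x in M. X 0 x > 0"
    and slow: "\<And>v. v > 0 \<Longrightarrow>
        ((\<lambda>u. invtail M (X 0) (u * v) / invtail M (X 0) u) \<longlongrightarrow> 1) at_top"
    and contL: "continuous_on UNIV (invtail M (X 0))"
    and A: "\<exists>g k. (g \<longlongrightarrow> 0) at_top
               \<and> (\<exists>u0. \<forall>x y. u0 \<le> x \<longrightarrow> x \<le> y \<longrightarrow> g y \<le> g x)
               \<and> (\<forall>v>0. ((\<lambda>u. (invtail M (X 0) (u * v) / invtail M (X 0) u - 1) / g u)
                          \<longlongrightarrow> k v) at_top)
               \<and> (\<exists>v>0. k v \<noteq> 0 \<and> (\<forall>u>0. k (u * v) \<noteq> k u))"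
  shows "(\<forall>\<epsilon>>0. \<exists>c>0. \<forall>n::nat. n \<ge> 1 \<longrightarrow>
            measure M {x \<in> space M.
              ln (invtail M (X 0) (X (record_idx (\<lambda>i. X i x) n) x))
                \<notin> {real n * (1 - \<epsilon>) <..< real n * (1 + \<epsilon>)}} < c / (real n)^2)
         \<and> (AE x in M. ((\<lambda>n. ln (invtail M (X 0) (X (record_idx (\<lambda>i. X i x) n) x)) / real n)
                          \<longlongrightarrow> 1) sequentially)"
proof -
  interpret prob_space M by (rule P)
  interpret R: iid_continuous_tail M X
    using slow[of 1] by (intro iid_continuous_tail_if_invtail_continuous rv indep ident pos contL) auto
  have ln_invtail: "ln (invtail M (X 0) v) = R.logtail v" for v
    using R.surv_pos[of v] by (simp add: invtail_def R.logtail_def R.surv_def ln_div)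
  have deviation: "{x \<in> space M. R.logtail (R.record_val n x)
        \<notin> {real n * (1 - \<epsilon>) <..< real n * (1 + \<epsilon>)}}
      = {x\<in>space M. \<epsilon> * real n \<le> \<bar>R.logtail (R.record_val n x) - real n\<bar>}" for n \<epsilon>
    by (auto simp: algebra_simps abs_if)
  show ?thesis
    unfolding ln_invtail deviation
    using R.logtail_record_deviation_rate R.AE_logtail_record_ratio by blast
qed

end
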